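(* Assume the following setting: $\mathcal{F}$ is a nonempty family of graphs with $\chi(\mathcal{F})=r+1\ge 3$; $0<\varepsilon<\frac12$, $0<\sigma<\frac{\varepsilon^3}{7}$, $0\le\alpha\le 1-\frac1r-\varepsilon$; $\mathcal{G}'_n$ is the set of $\mathcal{F}$-free $n$-vertex graphs with minimum degree larger than $(\pi(\mathcal{F})-\varepsilon)n$; and there is $N$ such that for all $n>N$, $|\mathrm{ex}(n,\mathcal{F})-\mathrm{ex}(n-1,\mathcal{F})-\pi(\mathcal{F})n|\le\sigma n$ and $|\lambda_\alpha(\mathcal{G}'_n)-2\mathrm{ex}(n,\mathcal{F})/n|\le\sigma$. Let $G$ be an $\mathcal{F}$-free graph on $n$ vertices with minimum degree $\delta$, let $\mathbf{x}=(x_1,\dots,x_n)$ be a non-negative unit eigenvector of $A_\alpha(G)$ corresponding to $\lambda_\alpha(G)$, and $x=\min\{x_1,\dots,x_n\}$. If $\lambda_{\alpha}(G)\geq \lambda_{\alpha}(\mathcal{G}'_{n})$ and $\delta\leq (\pi (\mathcal{F})-\varepsilon)n$, then for all sufficiently large $n$, $$x^2<\frac{1-\varepsilon^2}{n}.$$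
   Context: $\lambda_\alpha(G)$ is the largest eigenvalue of $A_\alpha(G)=\alpha D(G)+(1-\alpha)A(G)$ ($A$ adjacency matrix, $D$ diagonal degree matrix); $\lambda_\alpha(\mathcal{G}'_n)=\max_{H\in\mathcal{G}'_n}\lambda_\alpha(H)$. $\chi(\mathcal{F})=\min_{F\in\mathcal{F}}\chi(F)$. $\mathrm{ex}(n,\mathcal{F})$ is the maximum number of edges of an $\mathcal{F}$-free $n$-vertex graph, and $\pi(\mathcal{F})=\lim_{n\to\infty}\mathrm{ex}(n,\mathcal{F})/\binom n2$. *)

theory Defs
  imports "Jordan_Normal_Form.Char_Poly"
begin

definition graph_on :: "nat \<Rightarrow> (nat \<Rightarrow> nat \<Rightarrow> bool) \<Rightarrow> bool" where
  "graph_on n E \<longleftrightarrow> (\<forall>u v. E u v \<longrightarrow> u < n \<and> v < n \<and> u \<noteq> v \<and> E v u)"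

text \<open>A graph of a family is given as a pair (number of vertices, edge relation).\<close>
type_synonym graph = "nat \<times> (nat \<Rightarrow> nat \<Rightarrow> bool)"

definition contains :: "nat \<Rightarrow> (nat \<Rightarrow> nat \<Rightarrow> bool) \<Rightarrow> graph \<Rightarrow> bool" where
  "contains n E H \<longleftrightarrow> (\<exists>f. inj_on f {..<fst H} \<and> f ` {..<fst H} \<subseteq> {..<n}
      \<and> (\<forall>u v. snd H u v \<longrightarrow> E (f u) (f v)))"

definition F_free :: "graph set \<Rightarrow> nat \<Rightarrow> (nat \<Rightarrow> nat \<Rightarrow> bool) \<Rightarrow> bool" where
  "F_free Fam n E \<longleftrightarrow> (\<forall>H\<in>Fam. \<not> contains n E H)"

definition colorable :: "graph \<Rightarrow> nat \<Rightarrow> bool" where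
  "colorable H k \<longleftrightarrow> (\<exists>c. (\<forall>v<fst H. c v < k) \<and> (\<forall>u v. snd H u v \<longrightarrow> c u \<noteq> c v))"

definition chromatic_number :: "graph \<Rightarrow> nat" where
  "chromatic_number H = (LEAST k. colorable H k)"

definition chi_family :: "graph set \<Rightarrow> nat" where
  "chi_family Fam = (LEAST k. \<exists>H\<in>Fam. chromatic_number H = k)"

definition num_edges :: "nat \<Rightarrow> (nat \<Rightarrow> nat \<Rightarrow> bool) \<Rightarrow> nat" where
  "num_edges n E = card {(u, v). u < v \<and> v < n \<and> E u v}"

definition ex_num :: "nat \<Rightarrow> graph set \<Rightarrow> nat" where
  "ex_num n Fam = Max {num_edges n E | E. graph_on n E \<and> F_free Fam n E}"

definition turan_density :: "graph set \<Rightarrow> real" where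
  "turan_density Fam = lim (\<lambda>n. real (ex_num n Fam) / real (n choose 2))"

definition degree :: "nat \<Rightarrow> (nat \<Rightarrow> nat \<Rightarrow> bool) \<Rightarrow> nat \<Rightarrow> nat" where
  "degree n E v = card {u. u < n \<and> E v u}"

definition min_degree :: "nat \<Rightarrow> (nat \<Rightarrow> nat \<Rightarrow> bool) \<Rightarrow> nat" where
  "min_degree n E = Min (degree n E ` {..<n})"

definition A_alpha :: "real \<Rightarrow> nat \<Rightarrow> (nat \<Rightarrow> nat \<Rightarrow> bool) \<Rightarrow> real mat" where
  "A_alpha \<alpha> n E = mat n n (\<lambda>(i, j).
      (if i = j then \<alpha> * real (degree n E i) else 0) + (1 - \<alpha>) * (if E i j then 1 else 0))"

definition lambda_alpha :: "real \<Rightarrow> nat \<Rightarrow> (nat \<Rightarrow> nat \<Rightarrow> bool) \<Rightarrow> real" where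
  "lambda_alpha \<alpha> n E = Max {k. eigenvalue (A_alpha \<alpha> n E) k}"

definition G'_set :: "graph set \<Rightarrow> real \<Rightarrow> nat \<Rightarrow> (nat \<Rightarrow> nat \<Rightarrow> bool) set" where
  "G'_set Fam \<epsilon> n = {E. graph_on n E \<and> F_free Fam n E
      \<and> real (min_degree n E) > (turan_density Fam - \<epsilon>) * real n}"

definition lambda_family :: "real \<Rightarrow> graph set \<Rightarrow> real \<Rightarrow> nat \<Rightarrow> real" where
  "lambda_family \<alpha> Fam \<epsilon> n = Max (lambda_alpha \<alpha> n ` G'_set Fam \<epsilon> n)"

end

theory Submission
  imports Defs "HOL-Analysis.Convex"
begin

(* Let u be a vertex of minimum degree d and m the least entry of x. The eigen-equation at u
   reads (\<lambda> - \<alpha> d) x_u = (1 - \<alpha>) \<Sum>_{v \<sim> u} x_v. Cauchy-Schwarz over the neighbourhood of u, together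
   with the unit norm of x in which each of the n - d non-neighbours contributes at least m\<^sup>2, gives
   (\<lambda> - \<alpha> d)\<^sup>2 m\<^sup>2 \<le> (1 - \<alpha>)\<^sup>2 d (1 - (n - d) m\<^sup>2). If m\<^sup>2 \<ge> (1 - \<epsilon>\<^sup>2)/n, this forces
   \<lambda> \<le> d + 2/3 \<epsilon>\<^sup>2 n \<le> (\<pi>(F) - \<epsilon> + 2/3 \<epsilon>\<^sup>2) n. On the other hand, summing the increments of
   ex(n, F) gives 2 ex(n, F)/n \<ge> (\<pi>(F) - \<sigma>) n - O(1), so \<lambda> \<ge> \<lambda>_\<alpha>(G'_n) \<ge> (\<pi>(F) - \<sigma>) n - O(1).
   Since \<sigma> + 2/3 \<epsilon>\<^sup>2 < \<epsilon>, the two bounds are incompatible for large n. *)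

lemma sum_squared_subset_le_unit_mass:
  fixes f :: "'a \<Rightarrow> real"
  assumes "finite A" and "B \<subseteq> A" and unit: "(\<Sum>i\<in>A. (f i)^2) = 1"
    and "0 \<le> m" and "\<And>i. i \<in> A \<Longrightarrow> m \<le> f i"
  shows "(\<Sum>i\<in>B. f i)^2 \<le> real (card B) * (1 - (real (card A) - real (card B)) * m^2)"
proof -
  have "real (card (A - B)) = real (card A) - real (card B)"
    using assms(1,2) by (simp add: card_Diff_subset finite_subset card_mono)
  moreover have "real (card (A - B)) * m^2 \<le> (\<Sum>i\<in>A - B. (f i)^2)"
    using assms(4,5) by (intro sum_bounded_below) (auto intro: power_mono)
  moreover have "(\<Sum>i\<in>B. (f i)^2) = 1 - (\<Sum>i\<in>A - B. (f i)^2)"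
    using sum.subset_diff[OF assms(2,1), of "\<lambda>i. (f i)^2"] unit by linarith
  ultimately have "(\<Sum>i\<in>B. (f i)^2) \<le> 1 - (real (card A) - real (card B)) * m^2"
    by simp
  then have "(\<Sum>i\<in>B. (f i)^2) * real (card B) \<le> real (card B) * (1 - (real (card A) - real (card B)) * m^2)"
    by (simp add: mult.commute mult_left_mono)
  then show ?thesis
    using sum_squared_le_sum_of_squares[of f B] by linarith
qed

lemma A_alpha_mult_vec_nth:
  assumes "u < n" and "dim_vec x = n"
  shows "(A_alpha \<alpha> n E *\<^sub>v x) $ u
    = \<alpha> * real (degree n E u) * x $ u + (1 - \<alpha>) * (\<Sum>j\<in>{j. j < n \<and> E u j}. x $ j)"
proof -
  have "(A_alpha \<alpha> n E *\<^sub>v x) $ u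
      = (\<Sum>j<n. (if u = j then \<alpha> * real (degree n E u) * x $ j else 0)
                + (1 - \<alpha>) * (if E u j then x $ j else 0))"
    using assms by (auto simp: A_alpha_def scalar_prod_def lessThan_atLeast0 algebra_simps
        intro!: sum.cong)
  also have "\<dots> = \<alpha> * real (degree n E u) * x $ u + (1 - \<alpha>) * (\<Sum>j\<in>{j. j < n \<and> E u j}. x $ j)"
    using assms(1) by (simp add: sum.distrib flip: sum_distrib_left sum.inter_filter)
  finally show ?thesis .
qed

lemma one_minus_sq_mult_shifted_square_ge:
  fixes \<epsilon> d n :: real
  assumes "\<epsilon>^2 \<le> 1/4" and "0 \<le> d" and "d \<le> n"
  shows "d * n \<le> (1 - \<epsilon>^2) * ((d + 2/3 * \<epsilon>^2 * n)^2 + d * (n - d))"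
proof -
  have "1 \<le> (1 - \<epsilon>^2) * (1 + 4/3 * \<epsilon>^2)"
    using assms(1) mult_left_mono[OF assms(1), of "\<epsilon>^2"] by (simp add: algebra_simps power2_eq_square)
  moreover have "0 \<le> d * n"
    using assms(2,3) by simp
  ultimately have "d * n \<le> (1 - \<epsilon>^2) * ((1 + 4/3 * \<epsilon>^2) * (d * n))"
    using mult_right_mono[of 1 _ "d * n"] by (metis mult.assoc mult_1)
  also have "\<dots> \<le> (1 - \<epsilon>^2) * ((1 + 4/3 * \<epsilon>^2) * (d * n) + (2/3 * \<epsilon>^2 * n)^2)"
    using assms(1) by (intro mult_left_mono) simp_all
  also have "\<dots> = (1 - \<epsilon>^2) * ((d + 2/3 * \<epsilon>^2 * n)^2 + d * (n - d))"
    by (simp add: power2_eq_square algebra_simps)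
  finally show ?thesis .
qed

lemma eigen_equation_min_entry_bound:
  fixes lam \<alpha> d n m xu S \<epsilon> :: real
  assumes alpha: "0 \<le> \<alpha>" "\<alpha> \<le> 1" and d: "0 \<le> d" "d \<le> n" and eps: "\<epsilon>^2 \<le> 1/4"
    and m: "0 \<le> m" "m \<le> xu"
    and row: "lam * xu = \<alpha> * d * xu + (1 - \<alpha>) * S"
    and S: "S^2 \<le> d * (1 - (n - d) * m^2)"
    and mass: "1 - \<epsilon>^2 \<le> n * m^2"
  shows "lam \<le> d + 2/3 * \<epsilon>^2 * n"
proof (rule ccontr)
  define \<beta> where "\<beta> = 1 - \<alpha>"
  define y where "y = lam - \<alpha> * d"
  define z where "z = \<beta> * (d + 2/3 * \<epsilon>^2 * n)"
  define T where "T = y^2 + \<beta>^2 * d * (n - d)"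
  have \<beta>: "0 \<le> \<beta>" "\<beta> \<le> 1"
    using alpha by (auto simp: \<beta>_def)
  have z: "0 \<le> z"
    using \<beta> d by (simp add: z_def)
  assume "\<not> ?thesis"
  moreover have "\<beta> * (2/3 * \<epsilon>^2 * n) \<le> 2/3 * \<epsilon>^2 * n"
    using \<beta> d by (intro mult_left_le_one_le) auto
  moreover have "z = \<beta> * d + \<beta> * (2/3 * \<epsilon>^2 * n)" and "y = \<beta> * d + (lam - d)"
    by (simp_all add: z_def y_def \<beta>_def algebra_simps)
  ultimately have "z < y"
    by linarith
  with z have y: "0 \<le> y" and z_sq: "z^2 < y^2"
    by (auto intro: power_strict_mono)
  have "y * m \<le> \<beta> * S"
    using mult_left_mono[OF m(2) y] row by (simp add: y_def \<beta>_def algebra_simps)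
  then have "(y * m)^2 \<le> (\<beta> * S)^2"
    using y m(1) by (intro power_mono) auto
  also have "\<dots> \<le> \<beta>^2 * (d * (1 - (n - d) * m^2))"
    unfolding power_mult_distrib using S by (rule mult_left_mono) simp
  finally have "T * m^2 \<le> \<beta>^2 * d"
    by (simp add: T_def algebra_simps)
  have "(1 - \<epsilon>^2) * T \<le> n * m^2 * T"
    using mass d by (intro mult_right_mono) (auto simp: T_def)
  also have "\<dots> = n * (T * m^2)"
    by (simp add: mult_ac)
  also have "\<dots> \<le> n * (\<beta>^2 * d)"
    using \<open>T * m^2 \<le> \<beta>^2 * d\<close> d by (intro mult_left_mono) auto
  finally have "(1 - \<epsilon>^2) * T \<le> \<beta>^2 * (d * n)"
    by (simp add: mult_ac)
  moreover have "\<beta>^2 * (d * n) \<le> (1 - \<epsilon>^2) * (z^2 + \<beta>^2 * d * (n - d))"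
  proof -
    have "\<beta>^2 * (d * n)
        \<le> \<beta>^2 * ((1 - \<epsilon>^2) * ((d + 2/3 * \<epsilon>^2 * n)^2 + d * (n - d)))"
      by (rule mult_left_mono[OF one_minus_sq_mult_shifted_square_ge[OF eps d]]) simp
    also have "\<dots> = (1 - \<epsilon>^2) * (z^2 + \<beta>^2 * d * (n - d))"
      unfolding z_def power_mult_distrib by (simp add: algebra_simps)
    finally show ?thesis .
  qed
  moreover have "(1 - \<epsilon>^2) * (z^2 + \<beta>^2 * d * (n - d)) < (1 - \<epsilon>^2) * T"
    using z_sq eps by (simp add: T_def)
  ultimately show False
    by linarith
qed

lemma A_alpha_eigenvalue_le_min_degree_if_min_entry_large:
  assumes ev: "eigenvector (A_alpha \<alpha> n E) x lam"
    and nonneg: "\<forall>i<n. 0 \<le> x $ i" and unit: "(\<Sum>i<n. (x $ i)^2) = 1"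
    and alpha: "0 \<le> \<alpha>" "\<alpha> \<le> 1" and eps: "\<epsilon>^2 \<le> 1/4" and "0 < n"
    and large: "(1 - \<epsilon>^2) / real n \<le> (Min ((\<lambda>i. x $ i) ` {..<n}))^2"
  shows "lam \<le> real (min_degree n E) + 2/3 * \<epsilon>^2 * real n"
proof -
  define m where "m = Min ((\<lambda>i. x $ i) ` {..<n})"
  have "min_degree n E \<in> degree n E ` {..<n}"
    unfolding min_degree_def using \<open>0 < n\<close> by (intro Min_in) auto
  then obtain u where u: "u < n" "degree n E u = min_degree n E"
    by auto
  define Nb where "Nb = {j. j < n \<and> E u j}"
  have card_Nb: "card Nb = min_degree n E"
    using u(2) by (simp add: Nb_def degree_def)
  have Nb: "Nb \<subseteq> {..<n}"
    by (auto simp: Nb_def)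
  have m: "0 \<le> m" "\<And>i. i < n \<Longrightarrow> m \<le> x $ i"
    using \<open>0 < n\<close> nonneg by (auto simp: m_def Min_ge_iff lessThan_empty_iff)
  have dim: "dim_vec x = n"
    using ev by (simp add: eigenvector_def A_alpha_def)
  have "lam * x $ u = (A_alpha \<alpha> n E *\<^sub>v x) $ u"
    using ev u(1) dim by (simp add: eigenvector_def)
  then have row: "lam * x $ u = \<alpha> * real (min_degree n E) * x $ u + (1 - \<alpha>) * (\<Sum>j\<in>Nb. x $ j)"
    using A_alpha_mult_vec_nth[OF u(1) dim] u(2) by (simp add: Nb_def)
  have "(\<Sum>j\<in>Nb. x $ j)^2
      \<le> real (min_degree n E) * (1 - (real n - real (min_degree n E)) * m^2)"
    using sum_squared_subset_le_unit_mass[OF finite_lessThan Nb unit m(1)] m(2) card_Nb by simp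
  moreover have "1 - \<epsilon>^2 \<le> real n * m^2"
    using large \<open>0 < n\<close> by (simp add: m_def field_simps)
  moreover have "real (min_degree n E) \<le> real n"
    using card_Nb card_mono[OF finite_lessThan Nb] by simp
  ultimately show ?thesis
    using eigen_equation_min_entry_bound[OF alpha _ _ eps m(1) m(2)[OF u(1)] row] by simp
qed

lemma sum_of_linear_increments_lower_bound:
  fixes f :: "nat \<Rightarrow> real"
  assumes inc: "\<And>n. N < n \<Longrightarrow> c * real n \<le> f n - f (n - 1)" and "N \<le> n"
  shows "f N + c * (real n * (real n + 1) - real N * (real N + 1)) / 2 \<le> f n"
  using \<open>N \<le> n\<close>
proof (induction n rule: dec_induct)
  case base
  then show ?case by simp
next
  case (step n)
  have "c * real (Suc n) \<le> f (Suc n) - f n"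
    using inc[of "Suc n"] step(1) by simp
  moreover have "c * (real (Suc n) * (real (Suc n) + 1) - real N * (real N + 1)) / 2
      = c * (real n * (real n + 1) - real N * (real N + 1)) / 2 + c * real (Suc n)"
    by (simp add: field_simps)
  ultimately show ?case
    using step(3) by linarith
qed

lemma quadratic_growth_of_linear_increments:
  fixes f :: "nat \<Rightarrow> real"
  assumes "\<And>n. N < n \<Longrightarrow> c * real n \<le> f n - f (n - 1)"
  shows "\<exists>C. \<forall>n>N. c * real n - C \<le> 2 * f n / real n"
proof -
  define a where "a = 2 * f N - c * (real N * (real N + 1))"
  show ?thesis
  proof (intro exI[of _ "\<bar>a\<bar> + \<bar>c\<bar>"] allI impI)
    fix n
    assume "N < n"
    then have n: "1 \<le> real n"
      by simp
    have "a + c * (real n * (real n + 1)) \<le> 2 * f n"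
      using sum_of_linear_increments_lower_bound[OF assms less_imp_le[OF \<open>N < n\<close>]]
      by (simp add: a_def field_simps)
    then have "(a + c * (real n * (real n + 1))) / real n \<le> 2 * f n / real n"
      using n by (intro divide_right_mono) auto
    then have "c * real n + c + a / real n \<le> 2 * f n / real n"
      using n by (simp add: add_divide_distrib algebra_simps)
    moreover have "\<bar>a / real n\<bar> \<le> \<bar>a\<bar>"
      using n by (simp add: divide_le_eq mult_le_cancel_left1)
    ultimately show "c * real n - (\<bar>a\<bar> + \<bar>c\<bar>) \<le> 2 * f n / real n"
      using abs_ge_minus_self[of c] abs_ge_minus_self[of "a / real n"] by linarith
  qed
qed

lemma lambda_family_linear_lower_bound:
  assumes ex_inc: "\<And>n. N < n \<Longrightarrow>
      \<bar>real (ex_num n Fam) - real (ex_num (n - 1) Fam) - turan_density Fam * real n\<bar> \<le> \<sigma> * real n"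
    and lambda_close: "\<And>n. N < n \<Longrightarrow> \<bar>lambda_family \<alpha> Fam \<epsilon> n - 2 * real (ex_num n Fam) / real n\<bar> \<le> \<sigma>"
  shows "\<exists>C. \<forall>n>N. (turan_density Fam - \<sigma>) * real n - C \<le> lambda_family \<alpha> Fam \<epsilon> n"
proof -
  have "\<And>n. N < n \<Longrightarrow>
      (turan_density Fam - \<sigma>) * real n \<le> real (ex_num n Fam) - real (ex_num (n - 1) Fam)"
    using ex_inc by (fastforce simp: abs_le_iff left_diff_distrib)
  then obtain C where "\<forall>n>N. (turan_density Fam - \<sigma>) * real n - C \<le> 2 * real (ex_num n Fam) / real n"
    using quadratic_growth_of_linear_increments[of N "turan_density Fam - \<sigma>" "\<lambda>n. real (ex_num n Fam)"]
    by blast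
  then have "\<forall>n>N. (turan_density Fam - \<sigma>) * real n - (C + \<sigma>) \<le> lambda_family \<alpha> Fam \<epsilon> n"
    using lambda_close by (fastforce simp: abs_le_iff)
  then show ?thesis
    by blast
qed

lemma sigma_plus_two_thirds_eps_sq_less_eps:
  fixes \<epsilon> \<sigma> :: real
  assumes "0 < \<epsilon>" "\<epsilon> < 1/2" and "\<sigma> < \<epsilon>^3 / 7"
  shows "\<sigma> + 2/3 * \<epsilon>^2 < \<epsilon>"
proof -
  have "\<epsilon> * \<epsilon> \<le> \<epsilon> * (1/2)"
    using assms(1,2) by (intro mult_left_mono) auto
  then have "\<epsilon>^2 \<le> \<epsilon> / 2"
    by (simp add: power2_eq_square)
  moreover have "\<epsilon>^3 \<le> \<epsilon>^2"
    using assms(1,2) by (intro power_decreasing) auto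
  ultimately show ?thesis
    using assms by linarith
qed

theorem lemma5p4:
  fixes Fam :: "graph set" and r N :: nat and \<epsilon> \<sigma> \<alpha> :: real
  assumes graphs: "\<forall>H\<in>Fam. graph_on (fst H) (snd H)"
    and nonempty: "Fam \<noteq> {}"
    and chi: "chi_family Fam = r + 1" and r: "r + 1 \<ge> 3"
    and eps: "0 < \<epsilon>" "\<epsilon> < 1/2"
    and sigma: "0 < \<sigma>" "\<sigma> < \<epsilon>^3 / 7"
    and alpha: "0 \<le> \<alpha>" "\<alpha> \<le> 1 - 1 / real r - \<epsilon>"
    and N: "\<forall>n>N. \<bar>real (ex_num n Fam) - real (ex_num (n - 1) Fam) - turan_density Fam * real n\<bar>
                      \<le> \<sigma> * real n
              \<and> \<bar>lambda_family \<alpha> Fam \<epsilon> n - 2 * real (ex_num n Fam) / real n\<bar> \<le> \<sigma>"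
  shows "\<exists>N0. \<forall>n>N0. \<forall>E x.
           graph_on n E \<longrightarrow> F_free Fam n E \<longrightarrow>
           eigenvector (A_alpha \<alpha> n E) x (lambda_alpha \<alpha> n E) \<longrightarrow>
           (\<forall>i<n. x $ i \<ge> 0) \<longrightarrow> (\<Sum>i<n. (x $ i)^2) = 1 \<longrightarrow>
           lambda_alpha \<alpha> n E \<ge> lambda_family \<alpha> Fam \<epsilon> n \<longrightarrow>
           real (min_degree n E) \<le> (turan_density Fam - \<epsilon>) * real n \<longrightarrow>
           (Min ((\<lambda>i. x $ i) ` {..<n}))^2 < (1 - \<epsilon>^2) / real n"
proof -
  define k where "k = 2/3 * \<epsilon>^2"
  have eps_sq: "\<epsilon>^2 \<le> 1/4"
    using power_mono[of \<epsilon> "1/2" 2] eps by (simp add: power2_eq_square)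
  have "0 \<le> 1 / real r"
    by simp
  then have "\<alpha> \<le> 1"
    using alpha(2) eps(1) by linarith
  have gap: "0 < \<epsilon> - \<sigma> - k"
    using sigma_plus_two_thirds_eps_sq_less_eps[OF eps sigma(2)] by (simp add: k_def)
  obtain C where C: "\<forall>n>N. (turan_density Fam - \<sigma>) * real n - C \<le> lambda_family \<alpha> Fam \<epsilon> n"
    using lambda_family_linear_lower_bound[of N Fam \<sigma> \<alpha> \<epsilon>] N by blast
  define N0 where "N0 = max N (nat \<lceil>C / (\<epsilon> - \<sigma> - k)\<rceil>)"
  show ?thesis
  proof (intro exI[of _ N0] allI impI)
    fix n E x
    assume "N0 < n"
      and ev: "eigenvector (A_alpha \<alpha> n E) x (lambda_alpha \<alpha> n E)"
      and nonneg: "\<forall>i<n. 0 \<le> x $ i" and unit: "(\<Sum>i<n. (x $ i)^2) = 1"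
      and lambda_ge: "lambda_family \<alpha> Fam \<epsilon> n \<le> lambda_alpha \<alpha> n E"
      and low_degree: "real (min_degree n E) \<le> (turan_density Fam - \<epsilon>) * real n"
    have "N < n" and "nat \<lceil>C / (\<epsilon> - \<sigma> - k)\<rceil> < n"
      using \<open>N0 < n\<close> by (auto simp: N0_def)
    then have "C / (\<epsilon> - \<sigma> - k) < real n"
      by (meson order_le_less_trans of_nat_less_iff real_nat_ceiling_ge)
    show "(Min ((\<lambda>i. x $ i) ` {..<n}))^2 < (1 - \<epsilon>^2) / real n"
    proof (rule ccontr)
      assume "\<not> ?thesis"
      then have "lambda_alpha \<alpha> n E \<le> real (min_degree n E) + k * real n"
        using A_alpha_eigenvalue_le_min_degree_if_min_entry_large[OF ev nonneg unit alpha(1)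
            \<open>\<alpha> \<le> 1\<close> eps_sq] \<open>N < n\<close> by (simp add: k_def)
      then have "(\<epsilon> - \<sigma> - k) * real n \<le> C"
        using C \<open>N < n\<close> lambda_ge low_degree by (auto simp: algebra_simps)
      with \<open>C / (\<epsilon> - \<sigma> - k) < real n\<close> gap show False
        by (simp add: divide_less_eq mult.commute)
    qed
  qed
qed

end
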